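(* Let $S=S(\lambda_1,\ldots,\lambda_d)$ be a spider with $n$ vertices and let $S_L$ be its line graph (which has $n-1$ vertices). If $S$ has a connected partition of type $\mu$ for every integer partition $\mu$ of $n$, then $S_L$ has a connected partition of type $\nu$ for every integer partition $\nu$ of $n-1$.
   Context: A spider $S(\lambda_1,\ldots,\lambda_d)$, for positive integers $\lambda_1,\ldots,\lambda_d$, is the tree consisting of a vertex $v$ (the center) together with $d$ vertex-disjoint paths (legs) having $\lambda_1,\ldots,\lambda_d$ vertices respectively, where $v$ is joined by an edge to one endpoint of each leg. The line graph of a graph has the edges of the graph as vertices, two being adjacent when they share an endpoint. A connected partition of a graph $G=(V,E)$ is a partition of $V$ into blocks each inducing a connected subgraph; its type is the integer partition of $|V|$ formed by the block sizes in decreasing order. *)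

theory Defs
  imports Main "HOL-Library.Multiset" "HOL-Library.Disjoint_Sets"
begin

text \<open>Simple graphs are given by a vertex set V and an edge set E of 2-element sets.\<close>

definition adj_in :: "'a set set \<Rightarrow> 'a set \<Rightarrow> ('a \<times> 'a) set" where
  "adj_in E B = {(u, v). u \<in> B \<and> v \<in> B \<and> {u, v} \<in> E}"

definition connected_on :: "'a set set \<Rightarrow> 'a set \<Rightarrow> bool" where
  "connected_on E B \<longleftrightarrow> B \<noteq> {} \<and> (\<forall>u\<in>B. \<forall>v\<in>B. (u, v) \<in> (adj_in E B)\<^sup>*)"

definition connected_partition :: "'a set \<Rightarrow> 'a set set \<Rightarrow> 'a set set \<Rightarrow> bool" where
  "connected_partition V E P \<longleftrightarrow> partition_on V P \<and> (\<forall>B\<in>P. connected_on E B)"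

definition partition_type :: "'a set set \<Rightarrow> nat multiset" where
  "partition_type P = image_mset card (mset_set P)"

definition has_cp_type :: "'a set \<Rightarrow> 'a set set \<Rightarrow> nat multiset \<Rightarrow> bool" where
  "has_cp_type V E \<mu> \<longleftrightarrow> (\<exists>P. connected_partition V E P \<and> partition_type P = \<mu>)"

definition int_partition :: "nat \<Rightarrow> nat multiset \<Rightarrow> bool" where
  "int_partition n \<mu> \<longleftrightarrow> (\<forall>x\<in>#\<mu>. 0 < x) \<and> sum_mset \<mu> = n"

definition line_edges :: "'a set set \<Rightarrow> 'a set set set" where
  "line_edges E = {{e, f} | e f. e \<in> E \<and> f \<in> E \<and> e \<noteq> f \<and> e \<inter> f \<noteq> {}}"

text \<open>Spider S(ls!0,...,ls!(d-1)): center (0,0); leg i (1 \<le> i \<le> d) has vertices (i,1),...,(i,ls!(i-1)),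
  with (i,1) adjacent to the center.\<close>
definition spider_V :: "nat list \<Rightarrow> (nat \<times> nat) set" where
  "spider_V ls = {(0, 0)} \<union> {(i, j). 1 \<le> i \<and> i \<le> length ls \<and> 1 \<le> j \<and> j \<le> ls ! (i - 1)}"

definition spider_E :: "nat list \<Rightarrow> (nat \<times> nat) set set" where
  "spider_E ls = {{(0, 0), (i, 1)} | i. 1 \<le> i \<and> i \<le> length ls}
     \<union> {{(i, j), (i, Suc j)} | i j. 1 \<le> i \<and> i \<le> length ls \<and> 1 \<le> j \<and> Suc j \<le> ls ! (i - 1)}"

end

theory Submission
  imports Defs
begin

text \<open>A partition of the spider with a singleton block \<open>{x}\<close> exists by hypothesis (take the
  type \<open>\<nu> + {#1#}\<close>).  Deleting \<open>x\<close> leaves a connected partition of \<open>S - x\<close> of type \<open>\<nu>\<close>.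
  Now \<open>S - x\<close> embeds into the line graph: shift the path from the center to \<open>x\<close> one step
  outwards (the center goes to the first vertex of the leg of \<open>x\<close>), which is a bijection onto
  the non-center vertices, and then send each non-center vertex to the edge joining it to its
  parent.  Adjacent vertices go to distinct edges sharing an endpoint, so the blocks stay
  connected and their sizes are preserved.\<close>

lemma connected_on_image:
  assumes conn: "connected_on E B" and "B \<subseteq> W"
    and hom: "\<And>u w. u \<in> W \<Longrightarrow> w \<in> W \<Longrightarrow> {u, w} \<in> E \<Longrightarrow> {h u, h w} \<in> L"
  shows "connected_on L (h ` B)"
proof -
  have "(h u, h w) \<in> (adj_in L (h ` B))\<^sup>*" if "(u, w) \<in> (adj_in E B)\<^sup>*" for u w
    using that
  proof (induction rule: rtrancl_induct)
    case base
    then show ?case by simp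
  next
    case (step y z)
    then have "(h y, h z) \<in> adj_in L (h ` B)"
      using hom \<open>B \<subseteq> W\<close> by (auto simp: adj_in_def)
    with step.IH show ?case by (rule rtrancl_into_rtrancl)
  qed
  then show ?thesis using conn unfolding connected_on_def by auto
qed

lemma connected_partition_image:
  assumes cp: "connected_partition W E Q" and inj: "inj_on h W"
    and hom: "\<And>u w. u \<in> W \<Longrightarrow> w \<in> W \<Longrightarrow> {u, w} \<in> E \<Longrightarrow> {h u, h w} \<in> L"
  shows "connected_partition (h ` W) L ((`) h ` Q)"
proof -
  have po: "partition_on W Q" and conn: "\<forall>B\<in>Q. connected_on E B"
    using cp by (auto simp: connected_partition_def)
  have "(`) h ` Q - {{}} = (`) h ` Q"
    using po by (auto simp: partition_on_def)
  then have "partition_on (h ` W) ((`) h ` Q)"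
    using partition_on_inj_image[OF po inj] by simp
  moreover have "B \<subseteq> W" if "B \<in> Q" for B
    using po that by (auto simp: partition_on_def)
  ultimately show ?thesis
    using conn connected_on_image[of E _ W h L, OF _ _ hom] by (auto simp: connected_partition_def)
qed

lemma partition_type_image:
  assumes po: "partition_on W Q" and "finite W" and inj: "inj_on h W"
  shows "partition_type ((`) h ` Q) = partition_type Q"
proof -
  have sub: "B \<subseteq> W" if "B \<in> Q" for B
    using po that by (auto simp: partition_on_def)
  have "inj_on ((`) h) Q"
    by (rule inj_onI) (use inj_on_image_eq_iff[OF inj sub sub] in blast)
  then have "partition_type ((`) h ` Q) = image_mset (card \<circ> (`) h) (mset_set Q)"
    by (simp add: partition_type_def image_mset_mset_set[symmetric] multiset.map_comp)
  also have "\<dots> = partition_type Q"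
    unfolding partition_type_def
  proof (rule image_mset_cong)
    fix B assume "B \<in># mset_set Q"
    then have "B \<in> Q" using finite_elements[OF \<open>finite W\<close> po] by simp
    then show "(card \<circ> (`) h) B = card B"
      using inj_on_subset[OF inj sub] by (simp add: card_image)
  qed
  finally show ?thesis .
qed

lemma connected_partition_remove_singleton:
  assumes cp: "connected_partition V E P" and "{x} \<in> P"
  shows "connected_partition (V - {x}) E (P - {{x}})"
proof -
  have po: "partition_on V P" using cp by (simp add: connected_partition_def)
  have "x \<notin> C" if "C \<in> P - {{x}}" for C
  proof -
    have "disjoint P" using po by (simp add: partition_on_def)
    then have "disjnt C {x}"
      using that \<open>{x} \<in> P\<close> by (metis DiffE singletonI pairwiseD)
    then show ?thesis by (simp add: disjnt_def)
  qed
  then have "disjnt {x} (\<Union>(P - {{x}}))" by (auto simp: disjnt_def)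
  moreover have "P = insert {x} (P - {{x}})" "{x} \<notin> P - {{x}}" using \<open>{x} \<in> P\<close> by auto
  ultimately have "partition_on (V - {x}) (P - {{x}})"
    using po partition_on_insert by metis
  then show ?thesis using cp by (auto simp: connected_partition_def)
qed

lemma partition_type_remove_singleton:
  assumes "finite P" and "{x} \<in> P"
  shows "partition_type (P - {{x}}) = partition_type P - {#1#}"
  using assms by (simp add: partition_type_def mset_set_Diff image_mset_Diff)

lemma has_cp_type_image:
  assumes "has_cp_type W E \<mu>" and "finite W" and "inj_on h W"
    and "\<And>u w. u \<in> W \<Longrightarrow> w \<in> W \<Longrightarrow> {u, w} \<in> E \<Longrightarrow> {h u, h w} \<in> L"
  shows "has_cp_type (h ` W) L \<mu>"
proof -
  obtain Q where cp: "connected_partition W E Q" and type: "partition_type Q = \<mu>"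
    using assms(1) by (auto simp: has_cp_type_def)
  have "partition_on W Q" using cp by (simp add: connected_partition_def)
  then have "partition_type ((`) h ` Q) = \<mu>"
    using partition_type_image assms(2,3) type by blast
  with connected_partition_image[OF cp assms(3,4)] show ?thesis
    by (auto simp: has_cp_type_def)
qed

lemma has_cp_type_remove_vertex:
  assumes "finite V" and "has_cp_type V E (\<nu> + {#1#})"
  obtains x where "x \<in> V" "has_cp_type (V - {x}) E \<nu>"
proof -
  obtain P where cp: "connected_partition V E P" and type: "partition_type P = \<nu> + {#1#}"
    using assms(2) by (auto simp: has_cp_type_def)
  then have po: "partition_on V P" by (simp add: connected_partition_def)
  have "finite P" using finite_elements[OF \<open>finite V\<close> po] .
  have "1 \<in># partition_type P" using type by simp
  then obtain B where "B \<in> P" "card B = 1"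
    using \<open>finite P\<close> by (auto simp: partition_type_def)
  then obtain x where "{x} \<in> P" by (metis card_1_singletonE)
  then have "x \<in> V" using po by (auto simp: partition_on_def)
  moreover have "partition_type (P - {{x}}) = \<nu>"
    using partition_type_remove_singleton[OF \<open>finite P\<close> \<open>{x} \<in> P\<close>] type by simp
  then have "has_cp_type (V - {x}) E \<nu>"
    using connected_partition_remove_singleton[OF cp \<open>{x} \<in> P\<close>]
    unfolding has_cp_type_def by blast
  ultimately show ?thesis by (rule that)
qed

lemma spider_V_iff:
  "(a, b) \<in> spider_V ls \<longleftrightarrow> (a = 0 \<and> b = 0) \<or> (1 \<le> a \<and> a \<le> length ls \<and> 1 \<le> b \<and> b \<le> ls ! (a - 1))"
  by (auto simp: spider_V_def)

lemma finite_spider_V: "finite (spider_V ls)"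
proof (rule finite_subset)
  show "spider_V ls \<subseteq> insert (0, 0) (SIGMA a:{1..length ls}. {1..ls ! (a - 1)})"
    by (auto simp: spider_V_def)
qed auto

lemma spider_E_cases:
  assumes "e \<in> spider_E ls"
  obtains (center) i where "1 \<le> i" "i \<le> length ls" "e = {(0, 0), (i, 1)}"
  | (leg) i j where "1 \<le> i" "i \<le> length ls" "1 \<le> j" "Suc j \<le> ls ! (i - 1)"
      "e = {(i, j), (i, Suc j)}"
  using assms unfolding spider_E_def by blast

fun parent_edge :: "nat \<times> nat \<Rightarrow> (nat \<times> nat) set" where
  "parent_edge (i, j) = {if j = 1 then (0, 0) else (i, j - 1), (i, j)}"

fun leg_shift :: "nat \<times> nat \<Rightarrow> nat \<times> nat \<Rightarrow> nat \<times> nat" where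
  "leg_shift (i, j) (a, b) = (if a = 0 then (i, 1) else if a = i \<and> b < j then (a, Suc b) else (a, b))"

lemma inj_on_leg_shift:
  assumes "x \<in> spider_V ls"
  shows "inj_on (leg_shift x) (spider_V ls - {x})"
proof (rule inj_onI)
  fix p q assume "p \<in> spider_V ls - {x}" "q \<in> spider_V ls - {x}" "leg_shift x p = leg_shift x q"
  with assms show "p = q"
    by (cases x; cases p; cases q) (auto simp: spider_V_iff split: if_splits)
qed

lemma leg_shift_image_subset:
  assumes "x \<in> spider_V ls"
  shows "leg_shift x ` (spider_V ls - {x}) \<subseteq> spider_V ls - {(0, 0)}"
proof
  fix y assume "y \<in> leg_shift x ` (spider_V ls - {x})"
  then obtain p where "p \<in> spider_V ls - {x}" "y = leg_shift x p" by blast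
  with assms show "y \<in> spider_V ls - {(0, 0)}"
    by (cases x; cases p) (auto simp: spider_V_iff)
qed

lemma leg_shift_image:
  assumes "x \<in> spider_V ls"
  shows "leg_shift x ` (spider_V ls - {x}) = spider_V ls - {(0, 0)}"
proof (rule card_subset_eq)
  have "(0, 0) \<in> spider_V ls" by (simp add: spider_V_iff)
  then show "card (leg_shift x ` (spider_V ls - {x})) = card (spider_V ls - {(0, 0)})"
    using assms inj_on_leg_shift[OF assms] by (simp add: card_image finite_spider_V)
qed (use assms leg_shift_image_subset finite_spider_V in auto)

lemma inj_on_parent_edge: "inj_on parent_edge (spider_V ls - {(0, 0)})"
proof (rule inj_onI)
  fix p q assume p: "p \<in> spider_V ls - {(0, 0)}" and q: "q \<in> spider_V ls - {(0, 0)}"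
    and eq: "parent_edge p = parent_edge q"
  obtain a b c d where pq: "p = (a, b)" "q = (c, d)" by fastforce
  with p q have "1 \<le> a" "1 \<le> b" "1 \<le> c" "1 \<le> d" by (auto simp: spider_V_iff)
  show "p = q"
  proof (rule ccontr)
    assume "p \<noteq> q"
    have "p \<in> parent_edge q" "q \<in> parent_edge p"
      using eq pq by (metis insertCI parent_edge.simps)+
    with \<open>p \<noteq> q\<close> pq have "(a, b) = (if d = 1 then (0, 0) else (c, d - 1))"
      "(c, d) = (if b = 1 then (0, 0) else (a, b - 1))"
      by auto
    with \<open>1 \<le> a\<close> \<open>1 \<le> b\<close> \<open>1 \<le> c\<close> \<open>1 \<le> d\<close> show False
      by (auto split: if_splits)
  qed
qed

lemma spider_E_eq_parent_edge_image:
  assumes "\<forall>l\<in>set ls. 0 < l"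
  shows "spider_E ls = parent_edge ` (spider_V ls - {(0, 0)})"
proof
  show "spider_E ls \<subseteq> parent_edge ` (spider_V ls - {(0, 0)})"
  proof
    fix e assume "e \<in> spider_E ls"
    then show "e \<in> parent_edge ` (spider_V ls - {(0, 0)})"
    proof (cases rule: spider_E_cases)
      case (center i)
      then have "0 < ls ! (i - 1)" using assms by simp
      with center have "(i, 1) \<in> spider_V ls - {(0, 0)}" by (simp add: spider_V_iff)
      moreover have "e = parent_edge (i, 1)" using center by auto
      ultimately show ?thesis by blast
    next
      case (leg i j)
      then have "(i, Suc j) \<in> spider_V ls - {(0, 0)}" by (simp add: spider_V_iff)
      moreover have "e = parent_edge (i, Suc j)" using leg by auto
      ultimately show ?thesis by blast
    qed
  qed
next
  show "parent_edge ` (spider_V ls - {(0, 0)}) \<subseteq> spider_E ls"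
  proof
    fix e assume "e \<in> parent_edge ` (spider_V ls - {(0, 0)})"
    then obtain i j where ij: "(i, j) \<in> spider_V ls - {(0, 0)}" "e = parent_edge (i, j)"
      by (metis imageE surj_pair)
    show "e \<in> spider_E ls"
    proof (cases "j = 1")
      case True
      then show ?thesis using ij unfolding spider_E_def by (auto simp: spider_V_iff)
    next
      case False
      then have "e = {(i, j - 1), (i, Suc (j - 1))}" "1 \<le> j - 1" "Suc (j - 1) \<le> ls ! (i - 1)"
        "1 \<le> i" "i \<le> length ls"
        using ij by (auto simp: spider_V_iff)
      then show ?thesis unfolding spider_E_def by blast
    qed
  qed
qed

lemma parent_edges_leg_shift_meet_at_center:
  assumes "x \<in> spider_V ls" "x \<noteq> (0, 0)" "x \<noteq> (a, 1)" "1 \<le> a"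
  shows "parent_edge (leg_shift x (0, 0)) \<inter> parent_edge (leg_shift x (a, 1)) \<noteq> {}"
proof -
  obtain i j where x: "x = (i, j)" by fastforce
  with assms have "1 \<le> i" "1 \<le> j" by (auto simp: spider_V_iff)
  show ?thesis
  proof (cases "a = i")
    case True
    with assms x \<open>1 \<le> j\<close> have "leg_shift x (a, 1) = (i, 2)" by auto
    then have "(i, 1) \<in> parent_edge (leg_shift x (0, 0)) \<inter> parent_edge (leg_shift x (a, 1))"
      using x by simp
    then show ?thesis by blast
  next
    case False
    with assms x have "leg_shift x (a, 1) = (a, 1)" by auto
    then have "(0, 0) \<in> parent_edge (leg_shift x (0, 0)) \<inter> parent_edge (leg_shift x (a, 1))"
      using x by simp
    then show ?thesis by blast
  qed
qed

lemma parent_edges_leg_shift_meet_on_leg: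
  assumes "x \<noteq> (a, Suc b)" "1 \<le> a" "1 \<le> b"
  shows "parent_edge (leg_shift x (a, b)) \<inter> parent_edge (leg_shift x (a, Suc b)) \<noteq> {}"
proof -
  obtain i j where x: "x = (i, j)" by fastforce
  show ?thesis
  proof (cases "a = i \<and> b < j")
    case True
    with assms x have "leg_shift x (a, b) = (a, Suc b)" "leg_shift x (a, Suc b) = (a, Suc (Suc b))"
      by auto
    then have "(a, Suc b) \<in> parent_edge (leg_shift x (a, b)) \<inter> parent_edge (leg_shift x (a, Suc b))"
      by simp
    then show ?thesis by blast
  next
    case False
    with assms x have "leg_shift x (a, b) = (a, b)" "leg_shift x (a, Suc b) = (a, Suc b)" by auto
    then have "(a, b) \<in> parent_edge (leg_shift x (a, b)) \<inter> parent_edge (leg_shift x (a, Suc b))"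
      using \<open>1 \<le> b\<close> by simp
    then show ?thesis by blast
  qed
qed

lemma parent_edges_leg_shift_meet:
  assumes "x \<in> spider_V ls" "u \<noteq> x" "w \<noteq> x" and "{u, w} \<in> spider_E ls"
  shows "parent_edge (leg_shift x u) \<inter> parent_edge (leg_shift x w) \<noteq> {}"
  using \<open>{u, w} \<in> spider_E ls\<close>
proof (cases rule: spider_E_cases)
  case (center a)
  then have "u = (0, 0) \<and> w = (a, 1) \<or> u = (a, 1) \<and> w = (0, 0)"
    by (simp add: doubleton_eq_iff)
  then show ?thesis
    using assms center(1) parent_edges_leg_shift_meet_at_center[of x ls a]
    by (auto simp: Int_commute)
next
  case (leg a b)
  then have "u = (a, b) \<and> w = (a, Suc b) \<or> u = (a, Suc b) \<and> w = (a, b)"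
    by (simp add: doubleton_eq_iff)
  then show ?thesis
    using assms leg(1,3) parent_edges_leg_shift_meet_on_leg[of x a b]
    by (auto simp: Int_commute)
qed

lemma singleton_notin_spider_E: "{u} \<notin> spider_E ls"
proof
  assume "{u} \<in> spider_E ls"
  then show False
  proof (cases rule: spider_E_cases)
    case (center i)
    then have "u = (0, 0)" "u = (i, 1)" by (metis insertI1 singletonD insert_commute)+
    then show False by simp
  next
    case (leg i j)
    then have "u = (i, j)" "u = (i, Suc j)" by (metis insertI1 singletonD insert_commute)+
    then show False by simp
  qed
qed

lemma has_cp_type_line_graph_spider:
  assumes pos: "\<forall>l\<in>set ls. 0 < l" and x: "x \<in> spider_V ls"
    and "has_cp_type (spider_V ls - {x}) (spider_E ls) \<nu>"
  shows "has_cp_type (spider_E ls) (line_edges (spider_E ls)) \<nu>"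
proof -
  let ?V = "spider_V ls - {x}" and ?h = "parent_edge \<circ> leg_shift x"
  have inj: "inj_on ?h ?V"
    using inj_on_leg_shift[OF x] inj_on_parent_edge leg_shift_image[OF x]
    by (simp add: comp_inj_on)
  have image: "?h ` ?V = spider_E ls"
    unfolding image_comp[symmetric] leg_shift_image[OF x] spider_E_eq_parent_edge_image[OF pos] ..
  have hom: "{?h u, ?h w} \<in> line_edges (spider_E ls)"
    if "u \<in> ?V" "w \<in> ?V" "{u, w} \<in> spider_E ls" for u w
  proof -
    have "u \<noteq> w"
    proof
      assume "u = w"
      with that(3) singleton_notin_spider_E show False by simp
    qed
    then have "?h u \<noteq> ?h w" using inj that(1,2) by (meson inj_on_contraD)
    moreover have "?h u \<inter> ?h w \<noteq> {}"
      using parent_edges_leg_shift_meet[OF x] that by simp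
    moreover have "?h u \<in> spider_E ls" "?h w \<in> spider_E ls"
      using that(1,2) image by blast+
    ultimately show ?thesis
      unfolding line_edges_def mem_Collect_eq
      by (intro exI[of _ "?h u"] exI[of _ "?h w"]) simp
  qed
  have "finite ?V" by (simp add: finite_spider_V)
  from has_cp_type_image[OF assms(3) this inj hom] show ?thesis
    unfolding image .
qed

theorem proposition6p2:
  fixes ls :: "nat list" and n :: nat
  assumes "\<forall>l\<in>set ls. 0 < l"
    and "n = card (spider_V ls)"
    and "\<forall>\<mu>. int_partition n \<mu> \<longrightarrow> has_cp_type (spider_V ls) (spider_E ls) \<mu>"
  shows "\<forall>\<nu>. int_partition (n - 1) \<nu> \<longrightarrow> has_cp_type (spider_E ls) (line_edges (spider_E ls)) \<nu>"
proof (intro allI impI)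
  fix \<nu> assume "int_partition (n - 1) \<nu>"
  have "(0, 0) \<in> spider_V ls" by (simp add: spider_V_iff)
  then have "n \<ge> 1" using assms(2) finite_spider_V by (metis card_0_eq empty_iff less_one not_le)
  with \<open>int_partition (n - 1) \<nu>\<close> have "int_partition n (\<nu> + {#1#})"
    by (auto simp: int_partition_def)
  then have "has_cp_type (spider_V ls) (spider_E ls) (\<nu> + {#1#})" using assms(3) by blast
  with finite_spider_V obtain x where "x \<in> spider_V ls" "has_cp_type (spider_V ls - {x}) (spider_E ls) \<nu>"
    by (rule has_cp_type_remove_vertex)
  with assms(1) show "has_cp_type (spider_E ls) (line_edges (spider_E ls)) \<nu>"
    by (rule has_cp_type_line_graph_spider)
qed

end
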